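(* Let $p,q,r,s\in\mathbb{C}$ with $r\neq s^2$, $q\neq s^3$, or $p\neq s^4$, and let $\delta$ be the rational space quartic in $\mathbb{C}\mathbb{P}^3$ parametrised by $t\mapsto[t^4-p,\,t^3+q,\,t^2-r,\,t+s]$, and suppose $\delta$ is of the first species. Identify $\mathbb{C}\mathbb{P}^1$ with $\mathbb{C}\cup\{\infty\}$. If $\delta$ is nodal, then there exists a parametrisation $\varphi:\mathbb{C}\mathbb{P}^1\to\delta$ such that $\varphi(0)=\varphi(\infty)$ is the node of $\delta$, and any four points $\varphi(t_1),\varphi(t_2),\varphi(t_3),\varphi(t_4)$ on $\delta\setminus\{\varphi(0)\}$ are coplanar if and only if $t_1t_2t_3t_4=1$. If $\delta$ is cuspidal, then there exists a parametrisation $\varphi:\mathbb{C}\mathbb{P}^1\to\delta$ such that $\varphi(\infty)$ is the cusp of $\delta$, and any four points $\varphi(t_1),\varphi(t_2),\varphi(t_3),\varphi(t_4)$ on $\delta\setminus\{\varphi(\infty)\}$ are coplanar if and only if $t_1+t_2+t_3+t_4=0$.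
   Context: A space quartic is an irreducible non-planar curve of degree $4$ in $\mathbb{C}\mathbb{P}^3$; it is of the first species if it is contained in more than one quadric surface. A rational space quartic of the first species has exactly one singular point, which is either a node or a cusp. *)

theory Defs
  imports "HOL-Computational_Algebra.Polynomial"
begin

text \<open>Points of C^4 (lifts of points of CP^3) are functions nat => complex, of which
only the coordinates 0..3 matter.  CP^1 is identified with C + {infinity} via the
type complex option (None = infinity).  A morphism CP^1 -> CP^3 is given by four
binary forms of a common degree d; a binary form of degree d is encoded by a
univariate polynomial P of degree at most d via (u,v) |-> sum_i coeff P i u^i v^(d-i).\<close>

type_synonym pt4 = "nat \<Rightarrow> complex"
type_synonym bmap = "nat \<times> (nat \<Rightarrow> complex poly)"

definition bform :: "nat \<Rightarrow> complex poly \<Rightarrow> complex \<Rightarrow> complex \<Rightarrow> complex" where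
  "bform d P u v = (\<Sum>i\<le>d. coeff P i * u ^ i * v ^ (d - i))"

definition bform_du :: "nat \<Rightarrow> complex poly \<Rightarrow> complex \<Rightarrow> complex \<Rightarrow> complex" where
  "bform_du d P u v = (\<Sum>i\<le>d. of_nat i * coeff P i * u ^ (i - 1) * v ^ (d - i))"

definition bform_dv :: "nat \<Rightarrow> complex poly \<Rightarrow> complex \<Rightarrow> complex \<Rightarrow> complex" where
  "bform_dv d P u v = (\<Sum>i\<le>d. of_nat (d - i) * coeff P i * u ^ i * v ^ (d - i - 1))"

fun lift1 :: "complex option \<Rightarrow> complex \<times> complex" where
  "lift1 (Some t) = (t, 1)"
| "lift1 None = (1, 0)"

definition evalm :: "bmap \<Rightarrow> complex option \<Rightarrow> pt4" where
  "evalm m z = (\<lambda>j. bform (fst m) (snd m j) (fst (lift1 z)) (snd (lift1 z)))"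

definition evalm_du :: "bmap \<Rightarrow> complex option \<Rightarrow> pt4" where
  "evalm_du m z = (\<lambda>j. bform_du (fst m) (snd m j) (fst (lift1 z)) (snd (lift1 z)))"

definition evalm_dv :: "bmap \<Rightarrow> complex option \<Rightarrow> pt4" where
  "evalm_dv m z = (\<lambda>j. bform_dv (fst m) (snd m j) (fst (lift1 z)) (snd (lift1 z)))"

definition peq :: "pt4 \<Rightarrow> pt4 \<Rightarrow> bool" where
  "peq x y \<longleftrightarrow> (\<exists>c. c \<noteq> 0 \<and> (\<forall>j<4. x j = c * y j))"

definition lin_indep2 :: "pt4 \<Rightarrow> pt4 \<Rightarrow> bool" where
  "lin_indep2 x y \<longleftrightarrow> \<not> (\<exists>a b. (a, b) \<noteq> (0, 0) \<and> (\<forall>j<4. a * x j + b * y j = 0))"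

definition in_span2 :: "pt4 \<Rightarrow> pt4 \<Rightarrow> pt4 \<Rightarrow> bool" where
  "in_span2 x a b \<longleftrightarrow> (\<exists>c1 c2. \<forall>j<4. x j = c1 * a j + c2 * b j)"

definition is_bmap :: "bmap \<Rightarrow> bool" where
  "is_bmap m \<longleftrightarrow> (\<forall>j<4. degree (snd m j) \<le> fst m) \<and> (\<forall>z. \<exists>j<4. evalm m z j \<noteq> 0)"

definition curve_img :: "bmap \<Rightarrow> pt4 set" where
  "curve_img m = {x. \<exists>z. peq x (evalm m z)}"

text \<open>A parametrisation of the curve C: a birational (i.e. generically injective)
morphism from CP^1 onto C.\<close>
definition is_param :: "pt4 set \<Rightarrow> bmap \<Rightarrow> bool" where
  "is_param C m \<longleftrightarrow> is_bmap m \<and> curve_img m = C \<and>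
     (\<exists>F. finite F \<and> (\<forall>z w. z \<notin> F \<and> w \<notin> F \<and> peq (evalm m z) (evalm m w) \<longrightarrow> z = w))"

text \<open>The map is unramified (an immersion) at z: the differential has rank 2 on the cone.\<close>
definition unram :: "bmap \<Rightarrow> complex option \<Rightarrow> bool" where
  "unram m z \<longleftrightarrow> lin_indep2 (evalm_du m z) (evalm_dv m z)"

text \<open>Ordinary node of the image curve (w.r.t. the normalisation m): exactly two
preimages, two smooth branches with distinct tangent lines.\<close>
definition is_node :: "bmap \<Rightarrow> pt4 \<Rightarrow> bool" where
  "is_node m x \<longleftrightarrow> (\<exists>a b. a \<noteq> b \<and> {z. peq (evalm m z) x} = {a, b} \<and>
      unram m a \<and> unram m b \<and>
      \<not> (in_span2 (evalm_du m b) (evalm_du m a) (evalm_dv m a) \<and>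
         in_span2 (evalm_dv m b) (evalm_du m a) (evalm_dv m a)))"

text \<open>Cusp of the image curve: a unibranch singular point, i.e. exactly one preimage,
at which the normalisation is ramified.\<close>
definition is_cusp :: "bmap \<Rightarrow> pt4 \<Rightarrow> bool" where
  "is_cusp m x \<longleftrightarrow> (\<exists>a. {z. peq (evalm m z) x} = {a} \<and> \<not> unram m a)"

definition qform :: "(nat \<Rightarrow> nat \<Rightarrow> complex) \<Rightarrow> pt4 \<Rightarrow> complex" where
  "qform A x = (\<Sum>i<4. \<Sum>j\<in>{i..<4}. A i j * x i * x j)"

definition qforms_indep :: "(nat \<Rightarrow> nat \<Rightarrow> complex) \<Rightarrow> (nat \<Rightarrow> nat \<Rightarrow> complex) \<Rightarrow> bool" where
  "qforms_indep A B \<longleftrightarrow> \<not> (\<exists>a b. (a, b) \<noteq> (0, 0) \<and>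
      (\<forall>i j. i \<le> j \<and> j < 4 \<longrightarrow> a * A i j + b * B i j = 0))"

text \<open>First species: the curve lies on (at least) two distinct quadric surfaces.\<close>
definition first_species :: "pt4 set \<Rightarrow> bool" where
  "first_species C \<longleftrightarrow> (\<exists>A B. qforms_indep A B \<and> (\<forall>x\<in>C. qform A x = 0 \<and> qform B x = 0))"

definition coplanar4 :: "pt4 \<Rightarrow> pt4 \<Rightarrow> pt4 \<Rightarrow> pt4 \<Rightarrow> bool" where
  "coplanar4 x1 x2 x3 x4 \<longleftrightarrow> (\<exists>a. (\<exists>j<4. a j \<noteq> 0) \<and>
      (\<forall>x\<in>{x1, x2, x3, x4}. (\<Sum>j<4. a j * x j) = 0))"

definition gam :: "complex \<Rightarrow> complex \<Rightarrow> complex \<Rightarrow> complex \<Rightarrow> bmap" where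
  "gam p q r s = (4, \<lambda>j. if j = 0 then [:-p, 0, 0, 0, 1:]
                         else if j = 1 then [:q, 0, 0, 1:]
                         else if j = 2 then [:-r, 0, 1:]
                         else [:s, 1:])"

end

theory Submission
  imports Defs "Jordan_Normal_Form.Determinant"
begin

text \<open>Reparametrise the quartic by a Moebius transformation of \<open>\<complex>P\<^sup>1\<close> so that the node
becomes \<open>\<phi>(0) = \<phi>(\<infinity>)\<close>, respectively so that the cusp sits at \<open>\<infinity>\<close> and the
\<open>t\<^sup>3\<close>-coefficients of all four coordinate quartics vanish. A plane \<open>\<Sum> a\<^sub>j x\<^sub>j = 0\<close>
pulls back to the quartic \<open>\<Sum> a\<^sub>j \<phi>\<^sub>j(t)\<close>, which is nonzero because the curve is
non-planar; its roots are the parameters of the plane section. In the nodal case its constant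
and leading coefficients agree, so the product of the four roots is \<open>1\<close>; in the cuspidal case
its \<open>t\<^sup>3\<close>-coefficient vanishes, so their sum is \<open>0\<close>. Conversely, the plane through three
points of the curve meets it again exactly at the parameter fixed by this relation. The same
relation shows that \<open>\<phi>\<close> is injective on \<open>\<complex>\<close>: if \<open>\<phi>(t) = \<phi>(t')\<close> with \<open>t \<noteq> t'\<close>, the
points \<open>\<phi>(t), \<phi>(t'), \<phi>(u), \<phi>(v)\<close> would be coplanar for all \<open>u, v\<close>.\<close>

section \<open>Binary forms\<close>

lemma bform_homogeneous: "bform d P (k * u) (k * v) = k ^ d * bform d P u v"
proof -
  have scale: "coeff P i * (k * u) ^ i * (k * v) ^ (d - i) = k ^ d * (coeff P i * u ^ i * v ^ (d - i))"
    if "i \<in> {..d}" for i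
    using that by (simp add: power_mult_distrib algebra_simps flip: power_add)
  show ?thesis
    unfolding bform_def sum_distrib_left by (intro sum.cong refl scale)
qed

lemma bform_at_zero: "bform d P 0 v = coeff P 0 * v ^ d"
proof -
  have "coeff P i * 0 ^ i * v ^ (d - i) = (if i = 0 then coeff P 0 * v ^ d else 0)" for i
    by (cases i) auto
  then show ?thesis by (simp add: bform_def)
qed

lemma bform_at_infinity: "bform d P u 0 = coeff P d * u ^ d"
  by (simp add: bform_def power_0_left if_distrib sum.If_cases)

lemma bform_dehomogenize:
  assumes "degree P \<le> d" "v \<noteq> 0"
  shows "bform d P u v = v ^ d * poly P (u / v)"
proof -
  have "poly P (u / v) = (\<Sum>i\<le>d. coeff P i * (u / v) ^ i)"
    unfolding poly_altdef using assms(1)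
    by (intro sum.mono_neutral_left) (auto simp: coeff_eq_0)
  then have "v ^ d * poly P (u / v) = (\<Sum>i\<le>d. v ^ d * (coeff P i * (u / v) ^ i))"
    by (simp add: sum_distrib_left)
  also have "\<dots> = bform d P u v"
    unfolding bform_def using assms(2)
    by (intro sum.cong refl) (simp add: power_divide field_simps flip: power_add)
  finally show ?thesis ..
qed

lemma coeff_mult_at_degree_bounds:
  assumes "degree P \<le> m" "degree Q \<le> n"
  shows "coeff (P * Q) (m + n) = coeff P m * coeff Q n"
proof (cases "degree P = m \<and> degree Q = n")
  case True
  then show ?thesis using coeff_mult_degree_sum[of P Q] by simp
next
  case False
  then have "degree (P * Q) < m + n"
    using assms degree_mult_le[of P Q] by linarith
  moreover have "coeff P m = 0 \<or> coeff Q n = 0"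
    using False assms by (auto intro: coeff_eq_0)
  ultimately show ?thesis by (auto intro: coeff_eq_0)
qed

lemma bform_mult:
  assumes "degree P \<le> m" "degree Q \<le> n"
  shows "bform (m + n) (P * Q) u v = bform m P u v * bform n Q u v"
proof (cases "v = 0")
  case True
  then show ?thesis
    using coeff_mult_at_degree_bounds[OF assms] by (simp add: bform_at_infinity power_add)
next
  case False
  have "degree (P * Q) \<le> m + n"
    using assms degree_mult_le[of P Q] by linarith
  with False assms show ?thesis by (simp add: bform_dehomogenize power_add)
qed

lemma bform_power:
  assumes "degree P \<le> d"
  shows "bform (k * d) (P ^ k) u v = bform d P u v ^ k"
proof (induction k)
  case 0
  then show ?case by (simp add: bform_def)
next
  case (Suc k)
  have "degree (P ^ k) \<le> k * d"
    using degree_power_le[of P k] assms by (simp add: mult.commute order_trans)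
  from bform_mult[OF assms this] show ?case
    using Suc.IH by simp
qed

lemma bform_linear: "bform 1 [:b, a:] u v = a * u + b * v"
  by (simp add: bform_def add.commute)

lemma bform_sum: "bform d (\<Sum>i\<in>I. P i) u v = (\<Sum>i\<in>I. bform d (P i) u v)"
  by (simp add: bform_def coeff_sum sum_distrib_right sum.swap[of _ I])

lemma bform_smult: "bform d (Polynomial.smult c P) u v = c * bform d P u v"
  by (simp add: bform_def sum_distrib_left mult.assoc)

definition hom_subst :: "nat \<Rightarrow> complex poly \<Rightarrow> complex poly \<Rightarrow> complex poly \<Rightarrow> complex poly" where
  "hom_subst d P A B = (\<Sum>i\<le>d. Polynomial.smult (coeff P i) (A ^ i * B ^ (d - i)))"

lemma degree_hom_subst:
  assumes "degree A \<le> 1" "degree B \<le> 1"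
  shows "degree (hom_subst d P A B) \<le> d"
  unfolding hom_subst_def
proof (intro degree_sum_le finite_atMost order_trans[OF degree_smult_le])
  fix i assume "i \<in> {..d}"
  have "degree (A ^ i) \<le> i" "degree (B ^ (d - i)) \<le> d - i"
    using degree_power_le[of A i] degree_power_le[of B "d - i"] assms
    by (simp_all add: order_trans)
  then have "degree (A ^ i * B ^ (d - i)) \<le> i + (d - i)"
    using degree_mult_le[of "A ^ i" "B ^ (d - i)"] by linarith
  then show "degree (A ^ i * B ^ (d - i)) \<le> d" using \<open>i \<in> {..d}\<close> by simp
qed

lemma bform_hom_subst:
  assumes "degree A \<le> 1" "degree B \<le> 1"
  shows "bform d (hom_subst d P A B) u v = bform d P (bform 1 A u v) (bform 1 B u v)"
proof -
  have "bform d (A ^ i * B ^ (d - i)) u v = bform 1 A u v ^ i * bform 1 B u v ^ (d - i)"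
    if "i \<le> d" for i
  proof -
    have "degree (A ^ i) \<le> i" "degree (B ^ (d - i)) \<le> d - i"
      using degree_power_le[of A i] degree_power_le[of B "d - i"] assms
      by (simp_all add: order_trans)
    from bform_mult[OF this] that
    have "bform d (A ^ i * B ^ (d - i)) u v = bform i (A ^ i) u v * bform (d - i) (B ^ (d - i)) u v"
      by simp
    with bform_power[OF assms(1), of i] bform_power[OF assms(2), of "d - i"] show ?thesis
      by simp
  qed
  then show ?thesis
    by (simp add: hom_subst_def bform_sum bform_smult bform_def[of d P] mult.assoc)
qed

section \<open>Points of projective space\<close>

lemma peq_refl: "peq x x"
  unfolding peq_def by (intro exI[of _ 1]) simp

lemma peq_sym:
  assumes "peq x y"
  shows "peq y x"
proof -
  obtain c where "c \<noteq> 0" "\<forall>j<4. x j = c * y j" using assms unfolding peq_def by blast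
  then show ?thesis unfolding peq_def by (intro exI[of _ "1 / c"]) simp
qed

lemma peq_trans:
  assumes "peq x y" "peq y z"
  shows "peq x z"
proof -
  obtain c d where "c \<noteq> 0" "\<forall>j<4. x j = c * y j" "d \<noteq> 0" "\<forall>j<4. y j = d * z j"
    using assms unfolding peq_def by blast
  then show ?thesis unfolding peq_def by (intro exI[of _ "c * d"]) simp
qed

lemma peq_nonzero: "peq x y \<Longrightarrow> \<exists>j<4. y j \<noteq> 0 \<Longrightarrow> \<exists>j<4. x j \<noteq> 0"
  unfolding peq_def by auto

lemma peq_lincomb_eq_0:
  assumes "peq x y" "(\<Sum>j<4. a j * y j) = 0"
  shows "(\<Sum>j<4. a j * x j) = 0"
proof -
  obtain c where "\<forall>j<4. x j = c * y j" using assms(1) unfolding peq_def by blast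
  then have "(\<Sum>j<4. a j * x j) = c * (\<Sum>j<4. a j * y j)"
    by (simp add: sum_distrib_left algebra_simps)
  with assms(2) show ?thesis by simp
qed

lemma fibre_peq_cong: "peq x y \<Longrightarrow> {z. peq (evalm m z) x} = {z. peq (evalm m z) y}"
  using peq_sym peq_trans by blast

lemma is_node_peq: "is_node m x \<Longrightarrow> peq y x \<Longrightarrow> is_node m y"
  unfolding is_node_def using fibre_peq_cong by metis

lemma is_cusp_peq: "is_cusp m x \<Longrightarrow> peq y x \<Longrightarrow> is_cusp m y"
  unfolding is_cusp_def using fibre_peq_cong by metis

lemma lift1_nonzero: "lift1 z \<noteq> (0, 0)"
  by (cases z) auto

definition evalh :: "bmap \<Rightarrow> complex \<Rightarrow> complex \<Rightarrow> pt4" where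
  "evalh m u v = (\<lambda>j. bform (fst m) (snd m j) u v)"

lemma evalm_eq_evalh: "evalm m z = evalh m (fst (lift1 z)) (snd (lift1 z))"
  by (simp add: evalm_def evalh_def)

lemma evalh_homogeneous: "evalh m (k * u) (k * v) j = k ^ fst m * evalh m u v j"
  by (simp add: evalh_def bform_homogeneous)

lemma peq_evalh_scale: "k \<noteq> 0 \<Longrightarrow> peq (evalh m (k * u) (k * v)) (evalh m u v)"
  unfolding peq_def evalh_homogeneous by (intro exI[of _ "k ^ fst m"]) simp

lemma evalh_peq_evalm:
  assumes "(u, v) \<noteq> (0, 0)"
  shows "\<exists>z. peq (evalh m u v) (evalm m z)"
proof (cases "v = 0")
  case True
  with assms have "u \<noteq> 0" by simp
  then have "peq (evalh m (u * 1) (u * 0)) (evalh m 1 0)" by (rule peq_evalh_scale)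
  with True show ?thesis by (auto simp: evalm_eq_evalh intro: exI[of _ None])
next
  case False
  then have "peq (evalh m (v * (u / v)) (v * 1)) (evalh m (u / v) 1)" by (rule peq_evalh_scale)
  with False show ?thesis by (auto simp: evalm_eq_evalh intro: exI[of _ "Some (u / v)"])
qed

section \<open>Reparametrisation\<close>

lemma solve_linear_2x2:
  fixes a b c d u v :: complex
  assumes det: "a * d - b * c \<noteq> 0"
  obtains x y where "a * x + b * y = u" "c * x + d * y = v"
proof
  define x where "x = (d * u - b * v) / (a * d - b * c)"
  define y where "y = (a * v - c * u) / (a * d - b * c)"
  have dx: "(a * d - b * c) * x = d * u - b * v" and dy: "(a * d - b * c) * y = a * v - c * u"
    using det by (simp_all add: x_def y_def)
  have "(a * d - b * c) * (a * x + b * y) = a * ((a * d - b * c) * x) + b * ((a * d - b * c) * y)"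
    by (simp add: algebra_simps)
  also have "\<dots> = (a * d - b * c) * u"
    unfolding dx dy by (simp add: algebra_simps)
  finally show "a * x + b * y = u" using det by simp
  have "(a * d - b * c) * (c * x + d * y) = c * ((a * d - b * c) * x) + d * ((a * d - b * c) * y)"
    by (simp add: algebra_simps)
  also have "\<dots> = (a * d - b * c) * v"
    unfolding dx dy by (simp add: algebra_simps)
  finally show "c * x + d * y = v" using det by simp
qed

definition reparam :: "complex \<Rightarrow> complex \<Rightarrow> complex \<Rightarrow> complex \<Rightarrow> bmap \<Rightarrow> bmap" where
  "reparam a b c d m = (fst m, \<lambda>j. hom_subst (fst m) (snd m j) [:b, a:] [:d, c:])"

lemma evalh_reparam: "evalh (reparam a b c d m) u v = evalh m (a * u + b * v) (c * u + d * v)"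
proof -
  have linear: "degree [:b, a:] \<le> 1" "degree [:d, c:] \<le> 1"
    by (simp_all add: degree_pCons_eq_if)
  show ?thesis
    unfolding evalh_def reparam_def fst_conv snd_conv bform_hom_subst[OF linear] bform_linear ..
qed

lemma
  assumes "is_bmap m" and det: "a * d - b * c \<noteq> 0"
  shows is_bmap_reparam: "is_bmap (reparam a b c d m)"
    and curve_img_reparam: "curve_img (reparam a b c d m) = curve_img m"
proof -
  let ?r = "reparam a b c d m"
  have to_m: "\<exists>w. peq (evalm ?r z) (evalm m w)" for z
  proof -
    obtain u v where uv: "lift1 z = (u, v)" by force
    have "(a * u + b * v, c * u + d * v) \<noteq> (0, 0)"
    proof
      assume "(a * u + b * v, c * u + d * v) = (0, 0)"
      moreover have "(a * d - b * c) * u = d * (a * u + b * v) - b * (c * u + d * v)"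
        and "(a * d - b * c) * v = a * (c * u + d * v) - c * (a * u + b * v)"
        by (simp_all add: algebra_simps)
      ultimately have "(a * d - b * c) * u = 0" "(a * d - b * c) * v = 0" by simp_all
      with det lift1_nonzero[of z] uv show False by simp
    qed
    then show ?thesis
      using evalh_peq_evalm uv by (simp add: evalm_eq_evalh evalh_reparam)
  qed
  have from_m: "\<exists>z. peq (evalm m w) (evalm ?r z)" for w
  proof -
    obtain u v where uv: "lift1 w = (u, v)" by force
    obtain x y where "a * x + b * y = u" "c * x + d * y = v"
      using solve_linear_2x2[OF det] .
    moreover have "(x, y) \<noteq> (0, 0)"
      using calculation uv by (cases w) auto
    ultimately show ?thesis
      using evalh_peq_evalm[of x y ?r] uv by (simp add: evalm_eq_evalh evalh_reparam)
  qed
  show "is_bmap ?r"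
    unfolding is_bmap_def
  proof (intro conjI allI impI)
    show "degree (snd ?r j) \<le> fst ?r" for j
      by (simp add: reparam_def degree_hom_subst degree_pCons_eq_if)
  next
    fix z
    obtain w where "peq (evalm ?r z) (evalm m w)" using to_m by blast
    then show "\<exists>j<4. evalm ?r z j \<noteq> 0"
      using peq_nonzero assms(1) unfolding is_bmap_def by blast
  qed
  show "curve_img ?r = curve_img m"
    unfolding curve_img_def using to_m from_m peq_trans peq_sym by blast
qed

section \<open>Plane sections\<close>

definition nonplanar :: "pt4 set \<Rightarrow> bool" where
  "nonplanar C \<longleftrightarrow> (\<forall>a. (\<forall>x\<in>C. (\<Sum>j<4. a j * x j) = 0) \<longrightarrow> (\<forall>j<4. a j = 0))"

definition linform :: "bmap \<Rightarrow> (nat \<Rightarrow> complex) \<Rightarrow> complex poly" where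
  "linform m a = (\<Sum>j<4. Polynomial.smult (a j) (snd m j))"

lemma coeff_linform: "coeff (linform m a) i = (\<Sum>j<4. a j * coeff (snd m j) i)"
  by (simp add: linform_def coeff_sum)

lemma degree_linform: "is_bmap m \<Longrightarrow> degree (linform m a) \<le> fst m"
  unfolding linform_def is_bmap_def
  by (auto intro!: degree_sum_le order_trans[OF degree_smult_le])

lemma lincomb_evalh: "(\<Sum>j<4. a j * evalh m u v j) = bform (fst m) (linform m a) u v"
  by (simp add: linform_def evalh_def bform_sum bform_smult)

lemma poly_linform: "is_bmap m \<Longrightarrow> poly (linform m a) t = (\<Sum>j<4. a j * evalm m (Some t) j)"
  by (simp add: lincomb_evalh evalm_eq_evalh bform_dehomogenize degree_linform)

lemma linform_nonzero:
  assumes "nonplanar (curve_img m)" "\<exists>j<4. a j \<noteq> 0"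
  shows "linform m a \<noteq> 0"
proof
  assume "linform m a = 0"
  then have "(\<Sum>j<4. a j * evalm m z j) = 0" for z
    by (simp add: evalm_eq_evalh lincomb_evalh bform_def)
  then have "\<forall>x\<in>curve_img m. (\<Sum>j<4. a j * x j) = 0"
    unfolding curve_img_def using peq_lincomb_eq_0 by blast
  with assms show False unfolding nonplanar_def by blast
qed

lemma exists_plane_through3:
  fixes x1 x2 x3 :: pt4
  shows "\<exists>a. (\<exists>j<4. a j \<noteq> 0) \<and> (\<forall>x\<in>{x1, x2, x3}. (\<Sum>j<4. a j * x j) = 0)"
proof -
  define row where "row i = vec 4 (if i = 0 then x1 else if i = 1 then x2 else x3)" for i :: nat
  define A where "A = mat\<^sub>r 4 4 (\<lambda>i. if i = 3 then 0\<^sub>v 4 else row i)"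
  have "det A = 0" unfolding A_def by (rule det_row_0) (auto simp: row_def)
  moreover have "A \<in> carrier_mat 4 4" by (simp add: A_def)
  ultimately obtain v where v: "v \<in> carrier_vec 4" "v \<noteq> 0\<^sub>v 4" "A *\<^sub>v v = 0\<^sub>v 4"
    using det_0_iff_vec_prod_zero_field by blast
  have "\<exists>j<4. v $ j \<noteq> 0"
    using v(1,2) by (auto simp: vec_eq_iff)
  moreover have "(\<Sum>j<4. v $ j * x j) = 0"
    if "i < 3" and "x = (if i = 0 then x1 else if i = 1 then x2 else x3)" for i :: nat and x
  proof -
    have "(A *\<^sub>v v) $ i = 0" using v(3) that(1) by simp
    then show ?thesis
      using that v(1) by (auto simp: A_def row_def scalar_prod_def atLeast0LessThan mult.commute)
  qed
  ultimately show ?thesis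
    by (intro exI[of _ "\<lambda>j. v $ j"]) (fastforce simp: numeral_eq_Suc)
qed

lemma coplanar4_evalm_iff:
  assumes "is_bmap m"
  shows "coplanar4 (evalm m (Some t1)) (evalm m (Some t2)) (evalm m (Some t3)) (evalm m (Some t4))
    \<longleftrightarrow> (\<exists>a. (\<exists>j<4. a j \<noteq> 0) \<and> (\<forall>t\<in>{t1, t2, t3, t4}. poly (linform m a) t = 0))"
  using poly_linform[OF assms] unfolding coplanar4_def by auto

lemma plane_through3_evalm:
  assumes "is_bmap m"
  obtains a where "\<exists>j<4. a j \<noteq> 0" "\<forall>t\<in>{t1, t2, t3}. poly (linform m a) t = 0"
  using exists_plane_through3[of "evalm m (Some t1)" "evalm m (Some t2)" "evalm m (Some t3)"]
    poly_linform[OF assms] by auto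

lemma linear_poly_eq: "degree (P :: complex poly) \<le> 1 \<Longrightarrow> P = [:coeff P 0, coeff P 1:]"
  by (auto simp: poly_eq_iff coeff_pCons coeff_eq_0 split: nat.split)

lemma quartic_with_three_roots:
  fixes P :: "complex poly"
  assumes "degree P \<le> 4" "distinct [t1, t2, t3]" "\<forall>t\<in>{t1, t2, t3}. poly P t = 0"
  obtains \<alpha> \<beta> where "P = [:-t1, 1:] * [:-t2, 1:] * [:-t3, 1:] * [:\<beta>, \<alpha>:]"
proof -
  have "[:-t1, 1:] dvd P" using assms(3) by (simp flip: poly_eq_0_iff_dvd)
  then obtain P1 where P1: "P = [:-t1, 1:] * P1" ..
  then have "poly P1 t2 = 0" using assms(2,3) by auto
  then have "[:-t2, 1:] dvd P1" by (simp flip: poly_eq_0_iff_dvd)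
  then obtain P2 where P2: "P1 = [:-t2, 1:] * P2" ..
  then have "poly P2 t3 = 0" using assms(2,3) P1 by auto
  then have "[:-t3, 1:] dvd P2" by (simp flip: poly_eq_0_iff_dvd)
  then obtain Q where Q: "P2 = [:-t3, 1:] * Q" ..
  have "degree Q \<le> 1"
  proof (cases "Q = 0")
    case False
    then have "degree P = 3 + degree Q"
      by (simp add: P1 P2 Q degree_mult_eq del: mult_pCons_left)
    with assms(1) show ?thesis by simp
  qed simp
  then have "Q = [:coeff Q 0, coeff Q 1:]" by (rule linear_poly_eq)
  moreover have "P = [:-t1, 1:] * [:-t2, 1:] * [:-t3, 1:] * Q"
    by (simp only: P1 P2 Q mult.assoc)
  ultimately show thesis
    using that[of "coeff Q 0" "coeff Q 1"] by argo
qed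

lemma three_roots_factor:
  fixes t1 t2 t3 \<alpha> \<beta> :: complex
  defines "P \<equiv> [:-t1, 1:] * [:-t2, 1:] * [:-t3, 1:] * [:\<beta>, \<alpha>:]"
  shows poly_three_roots_factor: "poly P t = (t - t1) * (t - t2) * (t - t3) * (\<beta> + \<alpha> * t)"
    and coeff_three_roots_factor: "coeff P 0 = - t1 * t2 * t3 * \<beta>"
      "coeff P 3 = \<beta> - \<alpha> * (t1 + t2 + t3)" "coeff P 4 = \<alpha>"
  unfolding P_def by (simp_all add: algebra_simps eval_nat_numeral)

lemma plane_section_factor:
  assumes m: "is_bmap m" "fst m = 4" "nonplanar (curve_img m)"
    and a: "\<exists>j<4. a j \<noteq> 0" "\<forall>t\<in>{t1, t2, t3}. poly (linform m a) t = 0"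
    and "distinct [t1, t2, t3]"
  obtains \<alpha> \<beta> where "(\<alpha>, \<beta>) \<noteq> (0, 0)"
    "linform m a = [:-t1, 1:] * [:-t2, 1:] * [:-t3, 1:] * [:\<beta>, \<alpha>:]"
proof -
  have "degree (linform m a) \<le> 4" using degree_linform[OF m(1)] m(2) by simp
  then obtain \<alpha> \<beta> where fac: "linform m a = [:-t1, 1:] * [:-t2, 1:] * [:-t3, 1:] * [:\<beta>, \<alpha>:]"
    using quartic_with_three_roots assms(6) a(2) by blast
  moreover have "(\<alpha>, \<beta>) \<noteq> (0, 0)"
    using fac linform_nonzero[OF m(3) a(1)] by auto
  ultimately show thesis using that by blast
qed

lemma coplanar4_iff_prod_eq_1:
  assumes m: "is_bmap m" "fst m = 4" "nonplanar (curve_img m)"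
    and node: "\<forall>j<4. evalm m (Some 0) j = evalm m None j"
    and distinct: "distinct [t1, t2, t3, t4]"
  shows "coplanar4 (evalm m (Some t1)) (evalm m (Some t2)) (evalm m (Some t3)) (evalm m (Some t4))
    \<longleftrightarrow> t1 * t2 * t3 * t4 = 1"
proof -
  have ends: "coeff (linform m a) 0 = coeff (linform m a) 4" for a
    using node m(2) by (simp add: coeff_linform evalm_eq_evalh evalh_def bform_at_zero bform_at_infinity)
  have "distinct [t1, t2, t3]" using distinct by simp
  show ?thesis
  proof
    assume "coplanar4 (evalm m (Some t1)) (evalm m (Some t2)) (evalm m (Some t3)) (evalm m (Some t4))"
    then obtain a where a: "\<exists>j<4. a j \<noteq> 0" "\<forall>t\<in>{t1, t2, t3, t4}. poly (linform m a) t = 0"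
      using coplanar4_evalm_iff[OF m(1)] by blast
    obtain \<alpha> \<beta> where nz: "(\<alpha>, \<beta>) \<noteq> (0, 0)"
      and fac: "linform m a = [:-t1, 1:] * [:-t2, 1:] * [:-t3, 1:] * [:\<beta>, \<alpha>:]"
      using plane_section_factor[OF m a(1) _ \<open>distinct [t1, t2, t3]\<close>] a(2) by blast
    have "(t4 - t1) * (t4 - t2) * (t4 - t3) * (\<beta> + \<alpha> * t4) = 0"
      using a(2) unfolding fac poly_three_roots_factor by simp
    then have "\<beta> = - \<alpha> * t4"
      using distinct by (auto simp: add_eq_0_iff2)
    moreover have "- t1 * t2 * t3 * \<beta> = \<alpha>"
      using ends[of a] unfolding fac coeff_three_roots_factor .
    ultimately have "\<alpha> * (t1 * t2 * t3 * t4 - 1) = 0" by (simp add: algebra_simps)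
    moreover have "\<alpha> \<noteq> 0" using nz \<open>\<beta> = - \<alpha> * t4\<close> by auto
    ultimately show "t1 * t2 * t3 * t4 = 1" by simp
  next
    assume prod: "t1 * t2 * t3 * t4 = 1"
    obtain a where a: "\<exists>j<4. a j \<noteq> 0" "\<forall>t\<in>{t1, t2, t3}. poly (linform m a) t = 0"
      using plane_through3_evalm[OF m(1)] .
    obtain \<alpha> \<beta> where fac: "linform m a = [:-t1, 1:] * [:-t2, 1:] * [:-t3, 1:] * [:\<beta>, \<alpha>:]"
      using plane_section_factor[OF m a \<open>distinct [t1, t2, t3]\<close>] by blast
    have "- t1 * t2 * t3 * \<beta> = \<alpha>"
      using ends[of a] unfolding fac coeff_three_roots_factor .
    then have "\<beta> + \<alpha> * t4 = \<beta> * (1 - t1 * t2 * t3 * t4)"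
      by (auto simp: algebra_simps)
    with prod have "poly (linform m a) t4 = 0" unfolding fac poly_three_roots_factor by simp
    with a show "coplanar4 (evalm m (Some t1)) (evalm m (Some t2)) (evalm m (Some t3)) (evalm m (Some t4))"
      using coplanar4_evalm_iff[OF m(1)] by blast
  qed
qed

lemma coplanar4_iff_sum_eq_0:
  assumes m: "is_bmap m" "fst m = 4" "nonplanar (curve_img m)"
    and cusp: "\<forall>j<4. coeff (snd m j) 3 = 0"
    and distinct: "distinct [t1, t2, t3, t4]"
  shows "coplanar4 (evalm m (Some t1)) (evalm m (Some t2)) (evalm m (Some t3)) (evalm m (Some t4))
    \<longleftrightarrow> t1 + t2 + t3 + t4 = 0"
proof -
  have cubic: "coeff (linform m a) 3 = 0" for a
    using cusp by (simp add: coeff_linform)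
  have "distinct [t1, t2, t3]" using distinct by simp
  show ?thesis
  proof
    assume "coplanar4 (evalm m (Some t1)) (evalm m (Some t2)) (evalm m (Some t3)) (evalm m (Some t4))"
    then obtain a where a: "\<exists>j<4. a j \<noteq> 0" "\<forall>t\<in>{t1, t2, t3, t4}. poly (linform m a) t = 0"
      using coplanar4_evalm_iff[OF m(1)] by blast
    obtain \<alpha> \<beta> where nz: "(\<alpha>, \<beta>) \<noteq> (0, 0)"
      and fac: "linform m a = [:-t1, 1:] * [:-t2, 1:] * [:-t3, 1:] * [:\<beta>, \<alpha>:]"
      using plane_section_factor[OF m a(1) _ \<open>distinct [t1, t2, t3]\<close>] a(2) by blast
    have "(t4 - t1) * (t4 - t2) * (t4 - t3) * (\<beta> + \<alpha> * t4) = 0"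
      using a(2) unfolding fac poly_three_roots_factor by simp
    then have "\<beta> = - \<alpha> * t4"
      using distinct by (auto simp: add_eq_0_iff2)
    moreover have "\<beta> = \<alpha> * (t1 + t2 + t3)"
      using cubic[of a] unfolding fac coeff_three_roots_factor by simp
    ultimately have "\<alpha> * (t1 + t2 + t3 + t4) = 0" by (simp add: distrib_left)
    moreover have "\<alpha> \<noteq> 0" using nz \<open>\<beta> = - \<alpha> * t4\<close> by auto
    ultimately show "t1 + t2 + t3 + t4 = 0" by simp
  next
    assume sum: "t1 + t2 + t3 + t4 = 0"
    obtain a where a: "\<exists>j<4. a j \<noteq> 0" "\<forall>t\<in>{t1, t2, t3}. poly (linform m a) t = 0"
      using plane_through3_evalm[OF m(1)] .
    obtain \<alpha> \<beta> where fac: "linform m a = [:-t1, 1:] * [:-t2, 1:] * [:-t3, 1:] * [:\<beta>, \<alpha>:]"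
      using plane_section_factor[OF m a \<open>distinct [t1, t2, t3]\<close>] by blast
    have "\<beta> = \<alpha> * (t1 + t2 + t3)"
      using cubic[of a] unfolding fac coeff_three_roots_factor by simp
    then have "\<beta> + \<alpha> * t4 = \<alpha> * (t1 + t2 + t3 + t4)" by (simp add: algebra_simps)
    with sum have "poly (linform m a) t4 = 0" unfolding fac poly_three_roots_factor by simp
    with a show "coplanar4 (evalm m (Some t1)) (evalm m (Some t2)) (evalm m (Some t3)) (evalm m (Some t4))"
      using coplanar4_evalm_iff[OF m(1)] by blast
  qed
qed

lemma is_param_if_coplanar4_iff:
  assumes m: "is_bmap m"
    and coplanar_iff: "\<And>t1 t2 t3 t4. distinct [t1, t2, t3, t4] \<Longrightarrow>
      coplanar4 (evalm m (Some t1)) (evalm m (Some t2)) (evalm m (Some t3)) (evalm m (Some t4))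
      \<longleftrightarrow> R t1 t2 t3 t4"
    and finite: "\<And>t1 t2 t3. finite {t4. R t1 t2 t3 t4}"
  shows "is_param (curve_img m) m"
proof -
  have inj: "t = t'" if peq: "peq (evalm m (Some t)) (evalm m (Some t'))" for t t'
  proof (rule ccontr)
    assume "t \<noteq> t'"
    have inf: "infinite (UNIV :: complex set)" by (rule infinite_UNIV_char_0)
    obtain u where u: "u \<notin> {t, t'}"
      using ex_new_if_finite[OF inf, of "{t, t'}"] by auto
    have "finite ({t, t', u} \<union> {v. R t t' u v})" using finite by simp
    then obtain v where v: "v \<notin> {t, t', u} \<union> {v. R t t' u v}"
      using ex_new_if_finite[OF inf] by presburger
    obtain a where a: "\<exists>j<4. a j \<noteq> 0"
      "\<forall>x\<in>{evalm m (Some t'), evalm m (Some u), evalm m (Some v)}. (\<Sum>j<4. a j * x j) = 0"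
      using exists_plane_through3 by blast
    then have "(\<Sum>j<4. a j * evalm m (Some t) j) = 0"
      using peq_lincomb_eq_0[OF peq] by blast
    with a have "coplanar4 (evalm m (Some t)) (evalm m (Some t')) (evalm m (Some u)) (evalm m (Some v))"
      unfolding coplanar4_def by auto
    moreover have "distinct [t, t', u, v]" using \<open>t \<noteq> t'\<close> u v by auto
    ultimately show False using coplanar_iff v by blast
  qed
  show ?thesis
    unfolding is_param_def
  proof (intro conjI m refl exI[of _ "{None}"] allI impI)
    fix z w assume "z \<notin> {None} \<and> w \<notin> {None} \<and> peq (evalm m z) (evalm m w)"
    then show "z = w" using inj by (cases z; cases w) auto
  qed simp
qed

section \<open>The quartic\<close>

lemma fst_gam: "fst (gam p q r s) = 4"
  by (simp add: gam_def)

lemma evalh_gam: "evalh (gam p q r s) u v j =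
  (if j = 0 then u ^ 4 - p * v ^ 4 else if j = 1 then u ^ 3 * v + q * v ^ 4
   else if j = 2 then u ^ 2 * v ^ 2 - r * v ^ 4 else u * v ^ 3 + s * v ^ 4)"
  by (simp add: evalh_def gam_def bform_def eval_nat_numeral atMost_Suc algebra_simps)

lemma is_bmap_gam:
  assumes "r \<noteq> s ^ 2 \<or> q \<noteq> s ^ 3 \<or> p \<noteq> s ^ 4"
  shows "is_bmap (gam p q r s)"
  unfolding is_bmap_def
proof (intro conjI allI impI)
  show "degree (snd (gam p q r s) j) \<le> fst (gam p q r s)" for j
    by (simp add: gam_def degree_pCons_eq_if)
next
  fix z
  show "\<exists>j<4. evalm (gam p q r s) z j \<noteq> 0"
  proof (cases z)
    case None
    then show ?thesis by (intro exI[of _ 0]) (simp add: evalm_eq_evalh evalh_gam)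
  next
    case (Some t)
    show ?thesis
    proof (rule ccontr)
      assume "\<not> ?thesis"
      then have "t ^ 4 = p" "t ^ 3 = - q" "t ^ 2 = r" "t = - s"
        using Some by (auto simp: evalm_eq_evalh evalh_gam add_eq_0_iff2 dest: spec[of _ 0] spec[of _ 1]
            spec[of _ 2] spec[of _ 3])
      with assms show False by (auto simp: eval_nat_numeral)
    qed
  qed
qed

lemma nonplanar_gam: "nonplanar (curve_img (gam p q r s))"
  unfolding nonplanar_def
proof (rule allI, rule impI)
  fix a :: "nat \<Rightarrow> complex"
  assume plane: "\<forall>x\<in>curve_img (gam p q r s). (\<Sum>j<4. a j * x j) = 0"
  define P where "P = [:- a 0 * p + a 1 * q - a 2 * r + a 3 * s, a 3, a 2, a 1, a 0:]"
  have "poly P t = 0" for t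
  proof -
    have "evalm (gam p q r s) (Some t) \<in> curve_img (gam p q r s)"
      unfolding curve_img_def using peq_refl by blast
    with plane have "(\<Sum>j<4. a j * evalm (gam p q r s) (Some t) j) = 0" by blast
    then show ?thesis
      by (simp add: P_def evalm_eq_evalh evalh_gam eval_nat_numeral algebra_simps)
  qed
  then have "P = 0" using poly_all_0_iff_0 by blast
  then show "\<forall>j<4. a j = 0" by (auto simp: P_def less_Suc_eq numeral_eq_Suc)
qed

lemma evalm_du_gam: "evalm_du (gam p q r s) (Some t) j =
   (if j = 0 then 4 * t ^ 3 else if j = 1 then 3 * t ^ 2 else if j = 2 then 2 * t else 1)"
  by (simp add: evalm_du_def gam_def bform_du_def eval_nat_numeral atMost_Suc)

lemma evalm_dv_gam: "evalm_dv (gam p q r s) (Some t) j =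
   (if j = 0 then - 4 * p else if j = 1 then 4 * q + t ^ 3
    else if j = 2 then 2 * t ^ 2 - 4 * r else 4 * s + 3 * t)"
  by (simp add: evalm_dv_def gam_def bform_dv_def eval_nat_numeral atMost_Suc algebra_simps)

lemma unram_gam_infinity: "unram (gam p q r s) None"
  unfolding unram_def lin_indep2_def
proof
  assume "\<exists>a b. (a, b) \<noteq> (0, 0) \<and>
    (\<forall>j<4. a * evalm_du (gam p q r s) None j + b * evalm_dv (gam p q r s) None j = 0)"
  then obtain a b where "(a, b) \<noteq> (0, 0)"
    and dep: "\<forall>j<4. a * evalm_du (gam p q r s) None j + b * evalm_dv (gam p q r s) None j = 0"
    by blast
  with dep[rule_format, of 0] dep[rule_format, of 1] show False
    by (simp add: evalm_du_def evalm_dv_def gam_def bform_du_def bform_dv_def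
        eval_nat_numeral atMost_Suc)
qed

lemma ramified_gam_relations:
  assumes "\<not> unram (gam p q r s) (Some t)"
  shows "p = - ((4 * s + 3 * t) * t ^ 3)" "q = 3 * s * t ^ 2 + 2 * t ^ 3" "r = - 2 * s * t - t ^ 2"
proof -
  obtain a b where "(a, b) \<noteq> (0, 0)"
    and dep: "\<forall>j<4. a * evalm_du (gam p q r s) (Some t) j + b * evalm_dv (gam p q r s) (Some t) j = 0"
    using assms unfolding unram_def lin_indep2_def by blast
  have e0: "a * (4 * t ^ 3) + b * (- 4 * p) = 0"
    and e1: "a * (3 * t ^ 2) + b * (4 * q + t ^ 3) = 0"
    and e2: "a * (2 * t) + b * (2 * t ^ 2 - 4 * r) = 0"
    and e3: "a + b * (4 * s + 3 * t) = 0"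
    using dep[rule_format, of 0] dep[rule_format, of 1] dep[rule_format, of 2] dep[rule_format, of 3]
    by (simp_all add: evalm_du_gam evalm_dv_gam)
  have a: "a = - b * (4 * s + 3 * t)" using e3 by (simp add: add_eq_0_iff2)
  with \<open>(a, b) \<noteq> (0, 0)\<close> have "b \<noteq> 0" by auto
  have "- 4 * b * (p + (4 * s + 3 * t) * t ^ 3) = a * (4 * t ^ 3) + b * (- 4 * p)"
    unfolding a by (simp add: algebra_simps)
  from trans[OF this e0] \<open>b \<noteq> 0\<close> show "p = - ((4 * s + 3 * t) * t ^ 3)"
    by (simp add: add_eq_0_iff2)
  have "4 * b * (q - (3 * s * t ^ 2 + 2 * t ^ 3)) = a * (3 * t ^ 2) + b * (4 * q + t ^ 3)"
    unfolding a by (simp add: algebra_simps eval_nat_numeral)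
  with e1 \<open>b \<noteq> 0\<close> show "q = 3 * s * t ^ 2 + 2 * t ^ 3" by simp
  have "- 4 * b * (r - (- 2 * s * t - t ^ 2)) = a * (2 * t) + b * (2 * t ^ 2 - 4 * r)"
    unfolding a by (simp add: algebra_simps eval_nat_numeral)
  with e2 \<open>b \<noteq> 0\<close> show "r = - 2 * s * t - t ^ 2" by simp
qed

lemma coeff3_cusp_reparam:
  assumes "p = - ((4 * s + 3 * t) * t ^ 3)" "q = 3 * s * t ^ 2 + 2 * t ^ 3" "r = - 2 * s * t - t ^ 2"
    and "j < 4"
  shows "coeff (snd (reparam t (t * \<sigma> + 1) 1 \<sigma> (gam p q r s)) j) 3
    = (1 + 4 * \<sigma> * (t + s)) * evalm_du (gam p q r s) (Some t) j"
proof -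
  have "j = 0 \<or> j = 1 \<or> j = 2 \<or> j = 3" using assms(4) by auto
  then show ?thesis
    unfolding evalm_du_gam
    by (auto simp: assms(1-3) reparam_def gam_def hom_subst_def eval_nat_numeral atMost_Suc
        algebra_simps)
qed

section \<open>Normal forms\<close>

lemma exists_fourth_root: "\<exists>\<rho>. \<rho> ^ 4 = (c :: complex)"
proof
  have "csqrt (csqrt c) ^ 4 = (csqrt (csqrt c) ^ 2) ^ 2"
    by (simp add: power4_eq_xxxx power2_eq_square)
  also have "\<dots> = c" by (simp only: power2_csqrt)
  finally show "csqrt (csqrt c) ^ 4 = c" .
qed

lemma node_at_zero_and_infinity:
  assumes nondeg: "r \<noteq> s ^ 2 \<or> q \<noteq> s ^ 3 \<or> p \<noteq> s ^ 4"
    and node: "is_node (gam p q r s) x"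
  obtains \<phi> where "is_bmap \<phi>" "fst \<phi> = 4" "curve_img \<phi> = curve_img (gam p q r s)"
    "peq (evalm \<phi> (Some 0)) x" "\<forall>j<4. evalm \<phi> (Some 0) j = evalm \<phi> None j"
proof -
  let ?g = "gam p q r s"
  obtain a b where "a \<noteq> b" and "{z. peq (evalm ?g z) x} = {a, b}"
    using node unfolding is_node_def by blast
  then have "peq (evalm ?g a) x" "peq (evalm ?g b) x" by auto
  then have "peq (evalm ?g a) (evalm ?g b)" using peq_sym peq_trans by blast
  then obtain c where "c \<noteq> 0" and c: "\<forall>j<4. evalm ?g a j = c * evalm ?g b j"
    unfolding peq_def by blast
  \<comment> \<open>Rescaling the second preimage by a fourth root of \<open>c\<close> makes \<open>\<phi>(0) = \<phi>(\<infinity>)\<close>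
    hold for the coordinate vectors themselves, not just projectively.\<close>
  obtain \<rho> where \<rho>: "\<rho> ^ 4 = c" using exists_fourth_root by blast
  obtain au av bu bv where la: "lift1 a = (au, av)" and lb: "lift1 b = (bu, bv)" by force
  have "bu * av - au * bv \<noteq> 0" using \<open>a \<noteq> b\<close> la lb by (cases a; cases b) auto
  moreover have "\<rho> \<noteq> 0" using \<rho> \<open>c \<noteq> 0\<close> by auto
  moreover have "\<rho> * bu * av - au * (\<rho> * bv) = \<rho> * (bu * av - au * bv)"
    by (simp add: algebra_simps)
  ultimately have det: "\<rho> * bu * av - au * (\<rho> * bv) \<noteq> 0" by simp
  define \<phi> where "\<phi> = reparam (\<rho> * bu) au (\<rho> * bv) av ?g"
  have at0: "evalm \<phi> (Some 0) = evalm ?g a"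
    by (simp add: \<phi>_def evalm_eq_evalh evalh_reparam la)
  have "evalm \<phi> None j = evalm ?g a j" if "j < 4" for j
  proof -
    have "evalm \<phi> None j = evalh ?g (\<rho> * bu) (\<rho> * bv) j"
      by (simp add: \<phi>_def evalm_eq_evalh evalh_reparam)
    also have "\<dots> = c * evalm ?g b j"
      by (simp add: evalh_homogeneous fst_gam \<rho> evalm_eq_evalh lb)
    also have "\<dots> = evalm ?g a j" using c that by simp
    finally show ?thesis .
  qed
  with at0 have "\<forall>j<4. evalm \<phi> (Some 0) j = evalm \<phi> None j" by simp
  moreover note is_bmap_reparam[OF is_bmap_gam[OF nondeg] det]
    curve_img_reparam[OF is_bmap_gam[OF nondeg] det]
  moreover have "fst \<phi> = 4" by (simp add: \<phi>_def reparam_def fst_gam)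
  ultimately show thesis
    using that \<open>peq (evalm ?g a) x\<close> at0 unfolding \<phi>_def by metis
qed

lemma nodal_quartic_normal_form:
  assumes "r \<noteq> s ^ 2 \<or> q \<noteq> s ^ 3 \<or> p \<noteq> s ^ 4" and node: "is_node (gam p q r s) x"
  shows "\<exists>\<phi>. is_param (curve_img (gam p q r s)) \<phi> \<and>
    peq (evalm \<phi> (Some 0)) (evalm \<phi> None) \<and> is_node (gam p q r s) (evalm \<phi> (Some 0)) \<and>
    (\<forall>t1 t2 t3 t4. distinct [t1, t2, t3, t4] \<longrightarrow>
      (coplanar4 (evalm \<phi> (Some t1)) (evalm \<phi> (Some t2)) (evalm \<phi> (Some t3)) (evalm \<phi> (Some t4))
       \<longleftrightarrow> t1 * t2 * t3 * t4 = 1))"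
proof -
  obtain \<phi> where \<phi>: "is_bmap \<phi>" "fst \<phi> = 4" and img: "curve_img \<phi> = curve_img (gam p q r s)"
    and "peq (evalm \<phi> (Some 0)) x" and ends: "\<forall>j<4. evalm \<phi> (Some 0) j = evalm \<phi> None j"
    using node_at_zero_and_infinity[OF assms] .
  have "nonplanar (curve_img \<phi>)" using nonplanar_gam img by simp
  note coplanar = coplanar4_iff_prod_eq_1[OF \<phi> this ends]
  have "finite {t4. t1 * t2 * t3 * t4 = 1}" for t1 t2 t3 :: complex
    by (rule finite_subset[of _ "{1 / (t1 * t2 * t3)}"]) (auto simp: field_simps intro!: eq_divide_imp)
  with coplanar have "is_param (curve_img \<phi>) \<phi>"
    by (rule is_param_if_coplanar4_iff[OF \<phi>(1)])
  moreover have "peq (evalm \<phi> (Some 0)) (evalm \<phi> None)"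
    unfolding peq_def using ends by (intro exI[of _ 1]) simp
  moreover have "is_node (gam p q r s) (evalm \<phi> (Some 0))"
    using is_node_peq node \<open>peq (evalm \<phi> (Some 0)) x\<close> by blast
  ultimately show ?thesis using img coplanar by (intro exI[of _ \<phi>]) auto
qed

lemma cusp_at_infinity:
  assumes nondeg: "r \<noteq> s ^ 2 \<or> q \<noteq> s ^ 3 \<or> p \<noteq> s ^ 4"
    and cusp: "is_cusp (gam p q r s) x"
  obtains \<phi> where "is_bmap \<phi>" "fst \<phi> = 4" "curve_img \<phi> = curve_img (gam p q r s)"
    "peq (evalm \<phi> None) x" "\<forall>j<4. coeff (snd \<phi> j) 3 = 0"
proof -
  let ?g = "gam p q r s"
  obtain a where "{z. peq (evalm ?g z) x} = {a}" and "\<not> unram ?g a"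
    using cusp unfolding is_cusp_def by blast
  then have "peq (evalm ?g a) x" by auto
  obtain t where a: "a = Some t"
    using \<open>\<not> unram ?g a\<close> unram_gam_infinity by (cases a) auto
  note rel = ramified_gam_relations[OF \<open>\<not> unram ?g a\<close>[unfolded a]]
  have "t + s \<noteq> 0"
  proof
    assume "t + s = 0"
    then have "t = - s" by (simp add: add_eq_0_iff2)
    with rel nondeg show False by (simp add: eval_nat_numeral algebra_simps)
  qed
  define \<sigma> where "\<sigma> = - 1 / (4 * (t + s))"
  have "\<sigma> * (4 * (t + s)) = - 1"
    unfolding \<sigma>_def using \<open>t + s \<noteq> 0\<close> by (simp del: distrib_left_numeral)
  then have \<sigma>: "1 + 4 * \<sigma> * (t + s) = 0" by (simp only: ac_simps) simp
  define \<phi> where "\<phi> = reparam t (t * \<sigma> + 1) 1 \<sigma> ?g"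
  have det: "t * \<sigma> - (t * \<sigma> + 1) * 1 \<noteq> 0" by simp
  have "evalm \<phi> None = evalm ?g a"
    by (simp add: \<phi>_def a evalm_eq_evalh evalh_reparam)
  moreover have "\<forall>j<4. coeff (snd \<phi> j) 3 = 0"
    unfolding \<phi>_def using coeff3_cusp_reparam[OF rel] \<sigma> by simp
  moreover note is_bmap_reparam[OF is_bmap_gam[OF nondeg] det]
    curve_img_reparam[OF is_bmap_gam[OF nondeg] det]
  moreover have "fst \<phi> = 4" by (simp add: \<phi>_def reparam_def fst_gam)
  ultimately show thesis
    using that \<open>peq (evalm ?g a) x\<close> unfolding \<phi>_def by metis
qed

lemma cuspidal_quartic_normal_form:
  assumes "r \<noteq> s ^ 2 \<or> q \<noteq> s ^ 3 \<or> p \<noteq> s ^ 4" and cusp: "is_cusp (gam p q r s) x"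
  shows "\<exists>\<phi>. is_param (curve_img (gam p q r s)) \<phi> \<and> is_cusp (gam p q r s) (evalm \<phi> None) \<and>
    (\<forall>t1 t2 t3 t4. distinct [t1, t2, t3, t4] \<longrightarrow>
      (coplanar4 (evalm \<phi> (Some t1)) (evalm \<phi> (Some t2)) (evalm \<phi> (Some t3)) (evalm \<phi> (Some t4))
       \<longleftrightarrow> t1 + t2 + t3 + t4 = 0))"
proof -
  obtain \<phi> where \<phi>: "is_bmap \<phi>" "fst \<phi> = 4" and img: "curve_img \<phi> = curve_img (gam p q r s)"
    and "peq (evalm \<phi> None) x" and cubic: "\<forall>j<4. coeff (snd \<phi> j) 3 = 0"
    using cusp_at_infinity[OF assms] .
  have "nonplanar (curve_img \<phi>)" using nonplanar_gam img by simp
  note coplanar = coplanar4_iff_sum_eq_0[OF \<phi> this cubic]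
  have "finite {t4. t1 + t2 + t3 + t4 = 0}" for t1 t2 t3 :: complex
    by (rule finite_subset[of _ "{- (t1 + t2 + t3)}"]) (auto simp: add_eq_0_iff2 algebra_simps)
  with coplanar have "is_param (curve_img \<phi>) \<phi>"
    by (rule is_param_if_coplanar4_iff[OF \<phi>(1)])
  moreover have "is_cusp (gam p q r s) (evalm \<phi> None)"
    using is_cusp_peq cusp \<open>peq (evalm \<phi> None) x\<close> by blast
  ultimately show ?thesis using img coplanar by (intro exI[of _ \<phi>]) auto
qed

theorem lemma5p2:
  fixes p q r s :: complex
  assumes "r \<noteq> s ^ 2 \<or> q \<noteq> s ^ 3 \<or> p \<noteq> s ^ 4"
    and "first_species (curve_img (gam p q r s))"
  shows "((\<exists>x. is_node (gam p q r s) x) \<longrightarrow>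
            (\<exists>\<phi>. is_param (curve_img (gam p q r s)) \<phi> \<and>
               peq (evalm \<phi> (Some 0)) (evalm \<phi> None) \<and>
               is_node (gam p q r s) (evalm \<phi> (Some 0)) \<and>
               (\<forall>t1 t2 t3 t4. distinct [t1, t2, t3, t4] \<and>
                  (\<forall>t\<in>{t1, t2, t3, t4}. \<not> peq (evalm \<phi> (Some t)) (evalm \<phi> (Some 0))) \<longrightarrow>
                  (coplanar4 (evalm \<phi> (Some t1)) (evalm \<phi> (Some t2))
                             (evalm \<phi> (Some t3)) (evalm \<phi> (Some t4))
                   \<longleftrightarrow> t1 * t2 * t3 * t4 = 1))))
       \<and> ((\<exists>x. is_cusp (gam p q r s) x) \<longrightarrow>
            (\<exists>\<phi>. is_param (curve_img (gam p q r s)) \<phi> \<and>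
               is_cusp (gam p q r s) (evalm \<phi> None) \<and>
               (\<forall>t1 t2 t3 t4. distinct [t1, t2, t3, t4] \<and>
                  (\<forall>t\<in>{t1, t2, t3, t4}. \<not> peq (evalm \<phi> (Some t)) (evalm \<phi> None)) \<longrightarrow>
                  (coplanar4 (evalm \<phi> (Some t1)) (evalm \<phi> (Some t2))
                             (evalm \<phi> (Some t3)) (evalm \<phi> (Some t4))
                   \<longleftrightarrow> t1 + t2 + t3 + t4 = 0))))"
  by (intro conjI impI; elim exE;
      blast dest: nodal_quartic_normal_form[OF assms(1)] cuspidal_quartic_normal_form[OF assms(1)])

end
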